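(* Let the graph inverse semigroup $G(T)$ of the unary tree $T$ be a dense subsemigroup of a CLP-compact topological semigroup $S$. Then for every open neighborhood $U$ of $0$ in $S$ there exists $n\in\omega$ such that $L_k\subset U$ for every $k>n$.
   Context: All spaces are Hausdorff; CLP-compact means every cover by clopen sets has a finite subcover. The unary tree $T$ has vertex set $\omega$ and edges $(n,n+1)$ with source $n$ and range $n+1$. For $k\le p$, $(k,p)$ denotes the unique path from $k$ to $p$ (with $(n,n)$ the vertex $n$). The graph inverse semigroup $G(T)$ is the semigroup with zero $0$ generated by the vertices, the edges and formal inverses $e^{-1}$ of edges subject to: for vertices $a,b$: $ab=a$ if $a=b$, else $0$; for edges $e,f$: $s(e)e=er(e)=e$, $e^{-1}s(e)=r(e)e^{-1}=e^{-1}$, $e^{-1}f=r(e)$ if $e=f$, else $0$. For $n\in\omega$, $L_n=\{(n,m)(n,m)^{-1}\mid m\ge n\}\cup\{0\}$. *)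

theory Defs
  imports "HOL-Analysis.Analysis"
begin

text \<open>Graph inverse semigroup G(T) of the unary tree T (vertices omega, edges (n,n+1)).
  Every nonzero element of a graph inverse semigroup is uniquely of the form u v^-1 with
  u, v paths having the same range.  For T the paths are (k,p), k <= p, so a nonzero element
  is (k,p)(m,p)^-1, encoded as Some (k,m,p) with k <= p and m <= p; the zero is None.\<close>

type_synonym gt = "(nat \<times> nat \<times> nat) option"

definition GT :: "gt set" where
  "GT = {None} \<union> {Some (k, m, p) | k m p. k \<le> p \<and> m \<le> p}"

fun gt_mult :: "gt \<Rightarrow> gt \<Rightarrow> gt" where
  "gt_mult (Some (k, m, p)) (Some (k', m', p')) =
     (if m = k' then Some (k, m', max p p') else None)"
| "gt_mult _ _ = None"

definition gt_vertex :: "nat \<Rightarrow> gt" where "gt_vertex n = Some (n, n, n)"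
definition gt_edge :: "nat \<Rightarrow> gt" where "gt_edge n = Some (n, Suc n, Suc n)"
definition gt_edge_inv :: "nat \<Rightarrow> gt" where "gt_edge_inv n = Some (Suc n, n, Suc n)"

definition L :: "nat \<Rightarrow> gt set" where
  "L n = {Some (n, n, m) | m. n \<le> m} \<union> {None}"

definition clp_compact :: "'a::topological_space set \<Rightarrow> bool" where
  "clp_compact X \<longleftrightarrow>
     (\<forall>\<U>. (\<forall>U\<in>\<U>. open U \<and> closed U) \<and> X \<subseteq> \<Union>\<U> \<longrightarrow>
        (\<exists>\<V>\<subseteq>\<U>. finite \<V> \<and> X \<subseteq> \<Union>\<V>))"

definition topological_semigroup :: "('a::topological_space \<Rightarrow> 'a \<Rightarrow> 'a) \<Rightarrow> bool" where
  "topological_semigroup smul \<longleftrightarrow>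
     (\<forall>x y z. smul (smul x y) z = smul x (smul y z)) \<and>
     continuous_on UNIV (\<lambda>q. smul (fst q) (snd q))"

end

theory Submission
  imports Defs
begin

text \<open>Each idempotent \<open>e = (k,p)(k,p)\<^sup>-\<^sup>1\<close> is isolated in \<open>S\<close>: with
  \<open>e' = (k,p+1)(k,p+1)\<^sup>-\<^sup>1\<close>, the continuous maps \<open>s \<mapsto> e s e\<close> and \<open>s \<mapsto> e' s e'\<close> differ
  at \<open>e\<close> but agree on all but finitely many points of the dense set \<open>G(T)\<close>.
  If infinitely many \<open>L\<^sub>k\<close> left \<open>U\<close>, the idempotents witnessing this would form an
  infinite set of isolated points, which in a CLP-compact space cannot be closed; so it has an
  accumulation point \<open>z \<notin> U\<close>.  As a limit of idempotents \<open>z\<close> is idempotent, and since every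
  element of \<open>G(T)\<close> is annihilated by all but finitely many of them, \<open>z s = 0\<close> on a dense set,
  hence everywhere.  Thus \<open>z = z z = 0 \<in> U\<close>, a contradiction.\<close>

lemma continuous_on_mult_compose:
  assumes "continuous_on UNIV (\<lambda>q. smul (fst q) (snd q))"
    and "continuous_on UNIV g" and "continuous_on UNIV h"
  shows "continuous_on UNIV (\<lambda>s. smul (g s) (h s))"
  using continuous_on_compose2[OF assms(1) continuous_on_Pair[OF assms(2,3)]] by simp

lemma finite_open_imp_open_singleton:
  fixes V :: "'a::t1_space set"
  assumes "open V" "finite V" "x \<in> V"
  shows "open {x}"
proof -
  have "{x} = V - (V - {x})" using assms(3) by blast
  then show ?thesis using assms(1,2) by (metis finite_Diff finite_imp_closed open_Diff)
qed

lemma open_subset_of_finite_dense_trace: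
  fixes V :: "'a::t1_space set"
  assumes "closure D = UNIV" "open V" "V \<inter> D \<subseteq> F" "finite F"
  shows "V \<subseteq> F"
proof -
  have "V \<subseteq> closure (V \<inter> D)"
    using open_Int_closure_subset[OF assms(2), of D] assms(1) by simp
  also have "\<dots> \<subseteq> F"
    using assms(3,4) by (simp add: closure_minimal finite_imp_closed)
  finally show ?thesis .
qed

lemma clp_compact_closed_isolated_finite:
  fixes B :: "'a::t1_space set"
  assumes "clp_compact X" "B \<subseteq> X" "closed B" "\<And>b. b \<in> B \<Longrightarrow> open {b}"
  shows "finite B"
proof -
  define \<U> where "\<U> = insert (- B) ((\<lambda>b. {b}) ` B)"
  have "open B"
    using assms(4) open_UN[of B "\<lambda>b. {b}"] by simp
  then have "\<forall>U\<in>\<U>. open U \<and> closed U" "X \<subseteq> \<Union>\<U>"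
    using assms(3,4) by (auto simp: \<U>_def)
  then obtain \<V> where \<V>: "\<V> \<subseteq> \<U>" "finite \<V>" "X \<subseteq> \<Union>\<V>"
    using assms(1) unfolding clp_compact_def by meson
  have "B \<subseteq> \<Union>(\<V> - {- B})" using \<V>(3) assms(2) by blast
  moreover have "finite (\<Union>(\<V> - {- B}))"
    using \<V>(1,2) by (intro finite_Union) (auto simp: \<U>_def)
  ultimately show ?thesis by (rule finite_subset)
qed

lemma islimpt_idempotents_eventually_annihilating_eq_zero:
  fixes smul :: "'a::t2_space \<Rightarrow> 'a \<Rightarrow> 'a"
  assumes cont: "continuous_on UNIV (\<lambda>q. smul (fst q) (snd q))"
    and dense: "closure D = UNIV"
    and idem: "\<And>b. b \<in> B \<Longrightarrow> smul b b = b"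
    and annihilate: "\<And>d. d \<in> D \<Longrightarrow> finite {b \<in> B. smul b d \<noteq> zero}"
    and "z islimpt B"
  shows "z = zero"
proof -
  have "closure B \<subseteq> {s. smul s s = s}"
    using idem by (intro closure_minimal closed_Collect_eq
        continuous_on_mult_compose[OF cont] continuous_on_id) auto
  then have z_idem: "smul z z = z"
    using \<open>z islimpt B\<close> by (auto simp: closure_def)
  have "smul z d = zero" if "d \<in> D" for d
  proof -
    let ?F = "{b \<in> B. smul b d \<noteq> zero}"
    have "z islimpt (?F \<union> (B - ?F))"
      using \<open>z islimpt B\<close> by (simp add: Un_absorb1 Un_Diff_cancel)
    then have "z islimpt (B - ?F)"
      using islimpt_Un_finite annihilate[OF that] by blast
    moreover have "closure (B - ?F) \<subseteq> {s. smul s d = zero}"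
      by (intro closure_minimal closed_Collect_eq continuous_on_mult_compose[OF cont]
          continuous_on_id continuous_on_const) auto
    ultimately show ?thesis by (auto simp: closure_def)
  qed
  then have "closure D \<subseteq> {s. smul z s = zero}"
    by (intro closure_minimal closed_Collect_eq continuous_on_mult_compose[OF cont]
        continuous_on_id continuous_on_const) auto
  then have "smul z z = zero" using dense by auto
  then show ?thesis using z_idem by simp
qed

lemma open_singleton_if_sandwich_separates:
  fixes smul :: "'a::t2_space \<Rightarrow> 'a \<Rightarrow> 'a"
  assumes cont: "continuous_on UNIV (\<lambda>q. smul (fst q) (snd q))"
    and dense: "closure D = UNIV"
    and finite_diff: "finite {d \<in> D. smul (smul a d) a \<noteq> smul (smul a' d) a'}"
    and separates: "smul (smul a x) a \<noteq> smul (smul a' x) a'"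
  shows "open {x}"
proof -
  obtain W W' where W: "open W" "open W'" "smul (smul a x) a \<in> W" "smul (smul a' x) a' \<in> W'"
    "W \<inter> W' = {}"
    using hausdorff[OF separates] by blast
  define V where "V = {s. smul (smul a s) a \<in> W \<and> smul (smul a' s) a' \<in> W'}"
  have "open V"
    unfolding V_def Collect_conj_eq
    by (intro open_Int open_vimage[unfolded vimage_def] W(1,2)
        continuous_on_mult_compose[OF cont] continuous_on_id continuous_on_const)
  moreover have "V \<inter> D \<subseteq> {d \<in> D. smul (smul a d) a \<noteq> smul (smul a' d) a'}"
    using W(5) by (auto simp: V_def)
  ultimately have "V \<subseteq> {d \<in> D. smul (smul a d) a \<noteq> smul (smul a' d) a'}"
    using open_subset_of_finite_dense_trace[OF dense] finite_diff by blast
  then show ?thesis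
    using finite_open_imp_open_singleton[OF \<open>open V\<close>] finite_diff W(3,4)
    by (auto intro: finite_subset simp: V_def)
qed

lemma GT_None [simp]: "None \<in> GT"
  unfolding GT_def by blast

lemma GT_Some [simp]: "Some (k, m, p) \<in> GT \<longleftrightarrow> k \<le> p \<and> m \<le> p"
  unfolding GT_def by blast

lemma gt_mult_closed:
  assumes "x \<in> GT" "y \<in> GT" shows "gt_mult x y \<in> GT"
proof (cases x)
  case (Some t)
  show ?thesis
    using Some assms by (cases t; cases y) (auto simp: le_max_iff_disj)
qed simp

lemma gt_sandwich_ne_imp_idempotent_below:
  assumes "gt_mult (gt_mult (Some (k, k, p)) y) (Some (k, k, p)) \<noteq>
           gt_mult (gt_mult (Some (k, k, Suc p)) y) (Some (k, k, Suc p))"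
  shows "y \<in> (\<lambda>q. Some (k, k, q)) ` {..p}"
proof (cases y)
  case (Some t)
  obtain a b q where "y = Some (a, b, q)" using Some by (cases t) auto
  with assms have "a = k" "b = k" "max p q \<noteq> max (Suc p) q"
    by (auto split: if_splits)
  then show ?thesis using \<open>y = Some (a, b, q)\<close> by (auto simp: max_def split: if_splits)
qed (use assms in simp)

lemma finite_gt_mult_idempotent_nonzero: "finite {k. gt_mult (Some (k, k, m k)) x \<noteq> None}"
proof -
  have "{k. gt_mult (Some (k, k, m k)) x \<noteq> None} \<subseteq> (case x of None \<Rightarrow> {} | Some t \<Rightarrow> {fst t})"
    by (cases x) (auto split: if_splits)
  then show ?thesis by (rule finite_subset) (simp split: option.split)
qed

lemma open_singleton_gt_idempotent:
  fixes smul :: "'a::t2_space \<Rightarrow> 'a \<Rightarrow> 'a" and f :: "gt \<Rightarrow> 'a"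
  assumes cont: "continuous_on UNIV (\<lambda>q. smul (fst q) (snd q))"
    and inj: "inj_on f GT"
    and hom: "\<And>x y. x \<in> GT \<Longrightarrow> y \<in> GT \<Longrightarrow> f (gt_mult x y) = smul (f x) (f y)"
    and dense: "closure (f ` GT) = UNIV"
    and "k \<le> p"
  shows "open {f (Some (k, k, p))}"
proof -
  define e where "e = Some (k, k, p)"
  define e' where "e' = Some (k, k, Suc p)"
  have e_GT: "e \<in> GT" "e' \<in> GT" using \<open>k \<le> p\<close> by (auto simp: e_def e'_def)
  have sandwich: "smul (smul (f a) (f y)) (f a) = f (gt_mult (gt_mult a y) a)"
    if "a \<in> GT" "y \<in> GT" for a y
    using that by (simp add: hom gt_mult_closed)
  have "{d \<in> f ` GT. smul (smul (f e) d) (f e) \<noteq> smul (smul (f e') d) (f e')}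
      \<subseteq> f ` (\<lambda>q. Some (k, k, q)) ` {..p}"
  proof safe
    fix y assume "y \<in> GT" "smul (smul (f e) (f y)) (f e) \<noteq> smul (smul (f e') (f y)) (f e')"
    then have "gt_mult (gt_mult e y) e \<noteq> gt_mult (gt_mult e' y) e'"
      using e_GT by (auto simp: sandwich)
    then have "y \<in> (\<lambda>q. Some (k, k, q)) ` {..p}"
      unfolding e_def e'_def by (rule gt_sandwich_ne_imp_idempotent_below)
    then show "f y \<in> f ` (\<lambda>q. Some (k, k, q)) ` {..p}" by (rule imageI)
  qed
  then have "finite {d \<in> f ` GT. smul (smul (f e) d) (f e) \<noteq> smul (smul (f e') d) (f e')}"
    by (rule finite_subset) simp
  moreover have "smul (smul (f e) (f e)) (f e) \<noteq> smul (smul (f e') (f e)) (f e')"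
    using e_GT inj by (auto simp: sandwich inj_on_eq_iff gt_mult_closed e_def e'_def)
  ultimately show ?thesis
    unfolding e_def[symmetric] by (rule open_singleton_if_sandwich_separates[OF cont dense])
qed

lemma finite_gt_idempotents_not_annihilating:
  assumes hom: "\<And>x y. x \<in> GT \<Longrightarrow> y \<in> GT \<Longrightarrow> f (gt_mult x y) = smul (f x) (f y)"
    and e_GT: "\<And>k. k \<in> K \<Longrightarrow> Some (k, k, m k) \<in> GT"
    and "x \<in> GT"
  shows "finite {s \<in> (\<lambda>k. f (Some (k, k, m k))) ` K. smul s (f x) \<noteq> f None}"
proof -
  have "{s \<in> (\<lambda>k. f (Some (k, k, m k))) ` K. smul s (f x) \<noteq> f None}
      \<subseteq> (\<lambda>k. f (Some (k, k, m k))) ` {k. gt_mult (Some (k, k, m k)) x \<noteq> None}"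
  proof safe
    fix k assume "k \<in> K" "smul (f (Some (k, k, m k))) (f x) \<noteq> f None"
    then have "gt_mult (Some (k, k, m k)) x \<noteq> None"
      using hom[OF e_GT[OF \<open>k \<in> K\<close>] \<open>x \<in> GT\<close>] by metis
    then show "f (Some (k, k, m k))
        \<in> (\<lambda>k. f (Some (k, k, m k))) ` {k. gt_mult (Some (k, k, m k)) x \<noteq> None}"
      by simp
  qed
  then show ?thesis
    by (rule finite_subset) (intro finite_imageI finite_gt_mult_idempotent_nonzero)
qed

lemma finite_if_gt_idempotents_outside_nbhd_zero:
  fixes smul :: "'a::t2_space \<Rightarrow> 'a \<Rightarrow> 'a" and f :: "gt \<Rightarrow> 'a"
  assumes cont: "continuous_on UNIV (\<lambda>q. smul (fst q) (snd q))"
    and clp: "clp_compact (UNIV :: 'a set)"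
    and inj: "inj_on f GT"
    and hom: "\<And>x y. x \<in> GT \<Longrightarrow> y \<in> GT \<Longrightarrow> f (gt_mult x y) = smul (f x) (f y)"
    and dense: "closure (f ` GT) = UNIV"
    and "open U" "f None \<in> U"
    and outside: "\<And>k. k \<in> K \<Longrightarrow> k \<le> m k \<and> f (Some (k, k, m k)) \<notin> U"
  shows "finite K"
proof (rule ccontr)
  assume "infinite K"
  define b where "b k = f (Some (k, k, m k))" for k
  have e_GT: "Some (k, k, m k) \<in> GT" if "k \<in> K" for k
    using outside[OF that] by simp
  have "inj_on b K"
  proof (rule inj_onI)
    fix k k' assume "k \<in> K" "k' \<in> K" "b k = b k'"
    then have "Some (k, k, m k) = Some (k', k', m k')"
      using inj_onD[OF inj] e_GT unfolding b_def by blast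
    then show "k = k'" by simp
  qed
  then have "infinite (b ` K)"
    using \<open>infinite K\<close> finite_imageD by blast
  moreover have "open {s}" if "s \<in> b ` K" for s
    using that outside open_singleton_gt_idempotent[OF cont inj hom dense]
    by (auto simp: b_def)
  ultimately obtain z where "z islimpt b ` K"
    using clp_compact_closed_isolated_finite[OF clp] closed_limpt by blast
  have "b ` K \<subseteq> - U"
    using outside by (auto simp: b_def)
  then have "z \<notin> U"
    using islimpt_subset[OF \<open>z islimpt b ` K\<close>] closed_Compl[OF \<open>open U\<close>]
    by (auto simp: closed_limpt)
  moreover have "z = f None"
  proof (rule islimpt_idempotents_eventually_annihilating_eq_zero[OF cont dense])
    show "smul s s = s" if "s \<in> b ` K" for s
      using that hom[OF e_GT e_GT] by (force simp: b_def)
    show "finite {s \<in> b ` K. smul s d \<noteq> f None}" if "d \<in> f ` GT" for d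
      using that finite_gt_idempotents_not_annihilating[where f = f and smul = smul, OF hom e_GT]
      by (auto simp: b_def)
  qed fact
  ultimately show False using \<open>f None \<in> U\<close> by simp
qed

theorem lemma4p6:
  fixes smul :: "'a::t2_space \<Rightarrow> 'a \<Rightarrow> 'a"
    and f :: "gt \<Rightarrow> 'a"
    and U :: "'a set"
  assumes "topological_semigroup smul"
    and "clp_compact (UNIV :: 'a set)"
    and "inj_on f GT"
    and "\<And>x y. x \<in> GT \<Longrightarrow> y \<in> GT \<Longrightarrow> f (gt_mult x y) = smul (f x) (f y)"
    and "closure (f ` GT) = UNIV"
    and "open U" and "f None \<in> U"
  shows "\<exists>n. \<forall>k>n. f ` L k \<subseteq> U"
proof -
  define K where "K = {k. \<not> f ` L k \<subseteq> U}"
  have "\<forall>k\<in>K. \<exists>q. k \<le> q \<and> f (Some (k, k, q)) \<notin> U"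
    using \<open>f None \<in> U\<close> by (auto simp: K_def L_def)
  then obtain m where "\<forall>k\<in>K. k \<le> m k \<and> f (Some (k, k, m k)) \<notin> U"
    by metis
  moreover have "continuous_on UNIV (\<lambda>q. smul (fst q) (snd q))"
    using assms(1) by (simp add: topological_semigroup_def)
  ultimately have "finite K"
    using finite_if_gt_idempotents_outside_nbhd_zero[OF _ assms(2-7)] by blast
  then obtain n where "\<forall>k\<in>K. k \<le> n"
    using finite_nat_set_iff_bounded_le by blast
  then show ?thesis
    by (auto simp: K_def not_less[symmetric])
qed

end
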